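(* Let $p>1$ and let $s,q,V:\mathbb{R}^3\to(0,\infty)$ be radially symmetric $C^2$-functions. Suppose $U(x,t)=\psi(|x|,t)\frac{x}{|x|}$, with $\psi:[0,\infty)\times\mathbb{R}\to\mathbb{R}$, is a ($C^2$) solution of $$s(x)\partial_t^2U+\nabla\times\nabla\times U+q(x)U\pm V(x)|U|^{p-1}U=0\quad\text{on }\mathbb{R}^3\times\mathbb{R}.$$ Let $a:\mathbb{R}^3\to\mathbb{R}$ be a radially symmetric $C^2$-function. Then $U_a(x,t):=U(x,t+a(x))$ also solves the same equation (with the same sign).
   Context: A function $f:\mathbb{R}^3\to\mathbb{R}$ is radially symmetric if $f(x)$ depends only on $|x|$. *)

theory Defs
  imports "HOL-Analysis.Analysis"
begin

definition radial :: "(real^3 \<Rightarrow> 'b) \<Rightarrow> bool" where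
  "radial f \<longleftrightarrow> (\<forall>x y. norm x = norm y \<longrightarrow> f x = f y)"

definition C2 :: "('a::euclidean_space \<Rightarrow> 'b::real_normed_vector) \<Rightarrow> bool" where
  "C2 F \<longleftrightarrow> (\<exists>(DF :: 'a \<Rightarrow> 'a \<Rightarrow>\<^sub>L 'b) (D2F :: 'a \<Rightarrow> 'a \<Rightarrow>\<^sub>L ('a \<Rightarrow>\<^sub>L 'b)).
      (\<forall>z. (F has_derivative blinfun_apply (DF z)) (at z)) \<and>
      (\<forall>z. (DF has_derivative blinfun_apply (D2F z)) (at z)) \<and>
      continuous_on UNIV D2F)"

definition pd :: "3 \<Rightarrow> (real^3 \<Rightarrow> real^3) \<Rightarrow> real^3 \<Rightarrow> real^3" where
  "pd i F x = vector_derivative (\<lambda>h. F (x + h *\<^sub>R axis i 1)) (at 0)"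

definition curl :: "(real^3 \<Rightarrow> real^3) \<Rightarrow> real^3 \<Rightarrow> real^3" where
  "curl F x = vector [ pd 2 F x $ 3 - pd 3 F x $ 2,
                       pd 3 F x $ 1 - pd 1 F x $ 3,
                       pd 1 F x $ 2 - pd 2 F x $ 1 ]"

definition dtt :: "(real^3 \<Rightarrow> real \<Rightarrow> real^3) \<Rightarrow> real^3 \<Rightarrow> real \<Rightarrow> real^3" where
  "dtt U x t = vector_derivative (\<lambda>\<tau>. vector_derivative (\<lambda>\<sigma>. U x \<sigma>) (at \<tau>)) (at t)"

definition is_solution ::
  "(real^3 \<Rightarrow> real) \<Rightarrow> (real^3 \<Rightarrow> real) \<Rightarrow> (real^3 \<Rightarrow> real) \<Rightarrow> real \<Rightarrow> real
     \<Rightarrow> (real^3 \<Rightarrow> real \<Rightarrow> real^3) \<Rightarrow> bool" where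
  "is_solution s q V p sg U \<longleftrightarrow>
     C2 (\<lambda>(x, t). U x t) \<and>
     (\<forall>x t. s x *\<^sub>R dtt U x t + curl (curl (\<lambda>y. U y t)) x + q x *\<^sub>R U x t
            + (sg * V x * norm (U x t) powr (p - 1)) *\<^sub>R U x t = 0)"

end

theory Submission
  imports Defs
begin

text \<open>At each point x the shifted field U(x, t + a(x)) has the same time profile as U, merely
  translated, so the terms s U_tt, q U and V |U|^(p-1) U transform pointwise. The curl term is the
  only one where the x-dependent shift could interact with the spatial derivatives; but U(., t) and
  U(., t + a(.)) are both radial vector fields, and a differentiable radial field has a symmetric
  Jacobian, hence zero curl. So curl curl vanishes for both and the equation is preserved, without
  using the sign, positivity or radiality hypotheses on p, s, q, V.\<close>

lemma C2_imp_differentiable: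
  assumes "C2 F"
  shows "F differentiable (at z)"
  using assms unfolding C2_def differentiable_def by blast

lemma C2_imp_differentiable_on_graph:
  assumes "C2 (\<lambda>(x, t). U x t)" and "\<And>y. c differentiable (at y)"
  shows "(\<lambda>y. U y (c y)) differentiable (at y)"
proof -
  have "(\<lambda>y. (y, c y)) differentiable (at y)"
    using assms(2) by (simp add: differentiable_ident)
  from differentiable_chain_at[OF this C2_imp_differentiable[OF assms(1)]]
  show ?thesis by (simp add: o_def)
qed

lemma C2_bounded_linear:
  assumes "bounded_linear f"
  shows "C2 f"
  unfolding C2_def
proof (intro exI conjI allI)
  show "(f has_derivative blinfun_apply (Blinfun f)) (at z)" for z
    using assms by (simp add: bounded_linear_Blinfun_apply bounded_linear_imp_has_derivative)
  show "((\<lambda>_. Blinfun f) has_derivative blinfun_apply 0) (at z)" for z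
    by (simp add: has_derivative_const zero_blinfun.rep_eq)
qed (rule continuous_on_const)

lemma C2_add:
  assumes "C2 f" "C2 g"
  shows "C2 (\<lambda>z. f z + g z)"
proof -
  obtain Df D2f where "\<And>z. (f has_derivative blinfun_apply (Df z)) (at z)"
    "\<And>z. (Df has_derivative blinfun_apply (D2f z)) (at z)" "continuous_on UNIV D2f"
    using assms(1) unfolding C2_def by blast
  moreover obtain Dg D2g where "\<And>z. (g has_derivative blinfun_apply (Dg z)) (at z)"
    "\<And>z. (Dg has_derivative blinfun_apply (D2g z)) (at z)" "continuous_on UNIV D2g"
    using assms(2) unfolding C2_def by blast
  ultimately show ?thesis
    unfolding C2_def
    by (intro exI[of _ "\<lambda>z. Df z + Dg z"] exI[of _ "\<lambda>z. D2f z + D2g z"])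
      (auto intro!: has_derivative_add continuous_on_add simp: plus_blinfun.rep_eq)
qed

lemma C2_compose:
  fixes T :: "'a::euclidean_space \<Rightarrow> 'b::euclidean_space" and F :: "'b \<Rightarrow> 'c::real_normed_vector"
  assumes "C2 T" "C2 F"
  shows "C2 (\<lambda>z. F (T z))"
proof -
  obtain DT D2T where dT: "\<And>z. (T has_derivative blinfun_apply (DT z)) (at z)"
    and dDT: "\<And>z. (DT has_derivative blinfun_apply (D2T z)) (at z)"
    and cD2T: "continuous_on UNIV D2T"
    using assms(1) unfolding C2_def by blast
  obtain DF D2F where dF: "\<And>y. (F has_derivative blinfun_apply (DF y)) (at y)"
    and dDF: "\<And>y. (DF has_derivative blinfun_apply (D2F y)) (at y)"
    and cD2F: "continuous_on UNIV D2F"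
    using assms(2) unfolding C2_def by blast
  define DG where "DG z = DF (T z) o\<^sub>L DT z" for z
  define D2G' where "D2G' z h = (DF (T z) o\<^sub>L D2T z h) + (D2F (T z) (DT z h) o\<^sub>L DT z)" for z h
  have dG: "((\<lambda>z. F (T z)) has_derivative blinfun_apply (DG z)) (at z)" for z
    using has_derivative_compose[OF dT dF] by (simp add: DG_def blinfun_compose.rep_eq comp_def)
  have dDG: "(DG has_derivative D2G' z) (at z)" for z
    unfolding DG_def[abs_def] D2G'_def
    by (rule bounded_bilinear.FDERIV[OF bounded_bilinear_blinfun_compose
          has_derivative_compose[OF dT dDF] dDT])
  have D2G_apply: "blinfun_apply (Blinfun (D2G' z)) = D2G' z" for z
    by (rule bounded_linear_Blinfun_apply[OF has_derivative_bounded_linear[OF dDG]])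
  have cT: "continuous_on UNIV T" and cDT: "continuous_on UNIV DT" and cDF: "continuous_on UNIV DF"
    using dT dDT dDF by (meson continuous_at_imp_continuous_on has_derivative_continuous)+
  have cDFT: "continuous_on UNIV (\<lambda>z. DF (T z))" and cD2FT: "continuous_on UNIV (\<lambda>z. D2F (T z))"
    by (auto intro: continuous_on_compose2[OF cDF cT] continuous_on_compose2[OF cD2F cT])
  have "continuous_on UNIV (\<lambda>z. Blinfun (D2G' z))"
    by (rule continuous_on_blinfun_componentwise)
      (auto simp: D2G_apply D2G'_def intro!: continuous_intros cDFT cD2FT cDT cD2T)
  then show ?thesis
    unfolding C2_def using dG dDG D2G_apply by metis
qed

lemma C2_shear:
  fixes a :: "'a::euclidean_space \<Rightarrow> real"
  assumes "C2 a"
  shows "C2 (\<lambda>(x, t). (x, t + a x))"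
proof -
  have "C2 (\<lambda>z::'a \<times> real. (0::'a, a (fst z)))"
    by (intro C2_compose[OF C2_compose[OF C2_bounded_linear assms] C2_bounded_linear]
        bounded_linear_fst bounded_linear_Pair bounded_linear_zero bounded_linear_ident)
  moreover have "(\<lambda>(x, t). (x, t + a x)) = (\<lambda>z. z + (0, a (fst z)))"
    by auto
  ultimately show ?thesis
    using C2_add[OF C2_bounded_linear[OF bounded_linear_ident]] by metis
qed

lemma has_vector_derivative_translate_iff:
  fixes f :: "real \<Rightarrow> 'b::real_normed_vector"
  shows "((\<lambda>\<sigma>. f (\<sigma> + c)) has_vector_derivative f') (at \<tau>) \<longleftrightarrow>
         (f has_vector_derivative f') (at (\<tau> + c))"
proof
  assume "((\<lambda>\<sigma>. f (\<sigma> + c)) has_vector_derivative f') (at \<tau>)"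
  moreover have "((\<lambda>\<sigma>::real. \<sigma> - c) has_vector_derivative 1) (at (\<tau> + c))"
    by (auto intro!: derivative_eq_intros)
  ultimately show "(f has_vector_derivative f') (at (\<tau> + c))"
    using vector_diff_chain_at by (fastforce simp: o_def)
next
  assume "(f has_vector_derivative f') (at (\<tau> + c))"
  moreover have "((\<lambda>\<sigma>::real. \<sigma> + c) has_vector_derivative 1) (at \<tau>)"
    by (auto intro!: derivative_eq_intros)
  ultimately show "((\<lambda>\<sigma>. f (\<sigma> + c)) has_vector_derivative f') (at \<tau>)"
    using vector_diff_chain_at by (fastforce simp: o_def)
qed

lemma vector_derivative_translate:
  fixes f :: "real \<Rightarrow> 'b::real_normed_vector"
  shows "vector_derivative (\<lambda>\<sigma>. f (\<sigma> + c)) (at \<tau>) = vector_derivative f (at (\<tau> + c))"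
  unfolding vector_derivative_def has_vector_derivative_translate_iff ..

lemma dtt_time_shift: "dtt (\<lambda>x t. U x (t + a x)) x t = dtt U x (t + a x)"
  unfolding dtt_def vector_derivative_translate
  using vector_derivative_translate[of "\<lambda>\<tau>. vector_derivative (U x) (at \<tau>)" "a x" t] by simp

lemma has_vector_derivative_along_axis:
  assumes "(G has_derivative D) (at x)"
  shows "((\<lambda>h. G (x + h *\<^sub>R axis i 1)) has_vector_derivative D (axis i 1)) (at 0)"
proof -
  have "((\<lambda>h::real. x + h *\<^sub>R axis i 1) has_derivative (\<lambda>h. h *\<^sub>R axis i 1)) (at 0)"
    by (auto intro!: derivative_eq_intros)
  from has_derivative_compose[OF this, of G D] assms
  show ?thesis
    unfolding has_vector_derivative_def using linear_scale[OF has_derivative_linear[OF assms]]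
    by simp
qed

lemma pd_eq_derivative:
  assumes "(G has_derivative D) (at x)"
  shows "pd i G x = D (axis i 1)"
  unfolding pd_def by (rule vector_derivative_at[OF has_vector_derivative_along_axis[OF assms]])

lemma curl_eq_0_if_pd_symmetric:
  assumes "\<And>i k. pd i G x $ k = pd k G x $ i"
  shows "curl G x = 0"
  using assms[of 2 3] assms[of 3 1] assms[of 1 2]
  by (simp add: curl_def vec_eq_iff forall_3 vector_3)

lemma curl_const: "curl (\<lambda>_. c) x = 0"
  by (rule curl_eq_0_if_pd_symmetric) (simp add: pd_def)

lemma radial_derivative_eq:
  fixes f :: "real^3 \<Rightarrow> real"
  assumes rad: "radial f" and df: "(f has_derivative f') (at x)" and x: "x \<noteq> 0"
  shows "f' h = (h \<bullet> sgn x) * f' (sgn x)"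
proof -
  define g where "g r = f (r *\<^sub>R sgn x)" for r :: real
  have "norm (norm y *\<^sub>R sgn x) = norm y" for y
    using x by (simp add: norm_sgn)
  then have fg: "f = (\<lambda>y. g (norm y))"
    using rad unfolding radial_def g_def by metis
  have "((\<lambda>r::real. r *\<^sub>R sgn x) has_derivative (\<lambda>r. r *\<^sub>R sgn x)) (at (norm x))"
    by (auto intro!: derivative_eq_intros)
  moreover have "(f has_derivative f') (at (norm x *\<^sub>R sgn x))"
    using df x by (simp add: sgn_div_norm)
  ultimately have "(g has_derivative (\<lambda>r. f' (r *\<^sub>R sgn x))) (at (norm x))"
    unfolding g_def by (rule has_derivative_compose)
  from has_derivative_compose[OF has_derivative_norm[OF x] this]
  have "(f has_derivative (\<lambda>h. f' ((h \<bullet> sgn x) *\<^sub>R sgn x))) (at x)"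
    unfolding fg .
  with df have "f' h = f' ((h \<bullet> sgn x) *\<^sub>R sgn x)"
    by (metis has_derivative_unique)
  then show ?thesis
    using linear_scale[OF has_derivative_linear[OF df]] by simp
qed

lemma pd_radial_field_at_0:
  fixes G :: "real^3 \<Rightarrow> real^3"
  assumes G: "\<And>y. G y = \<phi> y *\<^sub>R (y /\<^sub>R norm y)" and "G differentiable (at 0)" and "i \<noteq> k"
  shows "pd i G 0 $ k = 0"
proof -
  obtain D where D: "(G has_derivative D) (at 0)"
    using assms(2) unfolding differentiable_def by blast
  have "((\<lambda>h. G (0 + h *\<^sub>R axis i 1) $ k) has_vector_derivative D (axis i 1) $ k) (at 0)"
    by (rule bounded_linear.has_vector_derivative[OF bounded_linear_vec_nth
          has_vector_derivative_along_axis[OF D]])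
  moreover have "(\<lambda>h. G (0 + h *\<^sub>R axis i 1) $ k) = (\<lambda>h. 0)"
    using \<open>i \<noteq> k\<close> by (simp add: G axis_def)
  ultimately have "D (axis i 1) $ k = 0"
    using vector_derivative_unique_at[OF _ has_vector_derivative_const] by metis
  then show ?thesis
    by (simp add: pd_eq_derivative[OF D])
qed

lemma pd_radial_field_symmetric:
  fixes G :: "real^3 \<Rightarrow> real^3"
  assumes rad: "radial \<phi>" and G: "\<And>y. G y = \<phi> y *\<^sub>R (y /\<^sub>R norm y)"
    and dG: "G differentiable (at x)" and x: "x \<noteq> 0"
  shows "pd i G x $ k = pd k G x $ i"
proof -
  txt \<open>With G y = \<rho> y y, the Jacobian at x is \<rho> x I + x \<otimes> \<nabla>\<rho> x, and \<nabla>\<rho> x is parallel to x.\<close>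
  define \<rho> where "\<rho> y = \<phi> y / norm y" for y
  have G\<rho>: "G y = \<rho> y *\<^sub>R y" for y
    by (simp add: G \<rho>_def divide_inverse)
  have \<rho>_inner: "\<rho> y = (G y \<bullet> y) / (y \<bullet> y)" for y
    by (cases "y = 0") (simp_all add: G\<rho> \<rho>_def)
  have "(\<lambda>y. (G y \<bullet> y) / (y \<bullet> y)) differentiable (at x)"
    using dG x by (intro differentiable_divide differentiable_inner differentiable_ident) auto
  then obtain \<rho>' where d\<rho>: "(\<rho> has_derivative \<rho>') (at x)"
    unfolding differentiable_def \<rho>_inner[abs_def] by blast
  have "radial \<rho>"
    using rad unfolding radial_def \<rho>_def by metis
  then have \<rho>'_axis: "\<rho>' (axis j 1) = x $ j * (\<rho>' (sgn x) / norm x)" for j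
    using radial_derivative_eq[OF _ d\<rho> x, of "axis j 1"]
    by (simp add: inner_axis' sgn_div_norm divide_inverse)
  have DG: "(G has_derivative (\<lambda>h. \<rho> x *\<^sub>R h + \<rho>' h *\<^sub>R x)) (at x)"
    unfolding G\<rho>[abs_def] by (rule has_derivative_scaleR[OF d\<rho> has_derivative_ident])
  have "pd i G x $ k = \<rho> x * (if k = i then 1 else 0) + x $ i * x $ k * (\<rho>' (sgn x) / norm x)"
    for i k
    unfolding pd_eq_derivative[OF DG] by (simp add: \<rho>'_axis) (simp add: axis_def)
  then show ?thesis
    by (simp add: mult.commute)
qed

lemma curl_radial_field:
  fixes G :: "real^3 \<Rightarrow> real^3"
  assumes "radial \<phi>" "\<And>y. G y = \<phi> y *\<^sub>R (y /\<^sub>R norm y)" "G differentiable (at x)"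
  shows "curl G x = 0"
proof (rule curl_eq_0_if_pd_symmetric)
  show "pd i G x $ k = pd k G x $ i" for i k
  proof (cases "x = 0")
    case True
    then show ?thesis
      using pd_radial_field_at_0[OF assms(2)] assms(3) by (cases "i = k") auto
  qed (use pd_radial_field_symmetric[OF assms] in blast)
qed

lemma curl_curl_radial_field:
  fixes G :: "real^3 \<Rightarrow> real^3"
  assumes "radial \<phi>" "\<And>y. G y = \<phi> y *\<^sub>R (y /\<^sub>R norm y)" "\<And>y. G differentiable (at y)"
  shows "curl (curl G) x = 0"
proof -
  have "curl G = (\<lambda>_. 0)"
    using curl_radial_field[OF assms] by blast
  then show ?thesis
    by (simp add: curl_const)
qed

theorem lemma2p3:
  fixes p sg :: real
    and s q V a :: "real^3 \<Rightarrow> real"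
    and U :: "real^3 \<Rightarrow> real \<Rightarrow> real^3"
  assumes "p > 1"
    and "sg = 1 \<or> sg = -1"
    and "radial s" "radial q" "radial V"
    and "C2 s" "C2 q" "C2 V"
    and "\<forall>x. s x > 0" "\<forall>x. q x > 0" "\<forall>x. V x > 0"
    and "\<exists>\<psi> :: real \<Rightarrow> real \<Rightarrow> real. \<forall>x t. U x t = \<psi> (norm x) t *\<^sub>R (x /\<^sub>R norm x)"
    and "is_solution s q V p sg U"
    and "radial a" "C2 a"
  shows "is_solution s q V p sg (\<lambda>x t. U x (t + a x))"
proof -
  obtain \<psi> :: "real \<Rightarrow> real \<Rightarrow> real" where U: "\<And>x t. U x t = \<psi> (norm x) t *\<^sub>R (x /\<^sub>R norm x)"
    using assms(12) by blast
  have C2U: "C2 (\<lambda>(x, t). U x t)"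
    and eq: "\<And>x t. s x *\<^sub>R dtt U x t + curl (curl (\<lambda>y. U y t)) x + q x *\<^sub>R U x t
                     + (sg * V x * norm (U x t) powr (p - 1)) *\<^sub>R U x t = 0"
    using assms(13) unfolding is_solution_def by auto
  have "C2 (\<lambda>z. (\<lambda>(x, t). U x t) ((\<lambda>(x, t). (x, t + a x)) z))"
    by (rule C2_compose[OF C2_shear[OF assms(15)] C2U])
  then have C2Ua: "C2 (\<lambda>(x, t). U x (t + a x))"
    by (simp add: case_prod_beta')
  have dU: "(\<lambda>y. U y t) differentiable (at y)" "(\<lambda>y. U y (t + a y)) differentiable (at y)"
    for t y
    using C2_imp_differentiable[OF assms(15)]
    by (auto intro!: C2_imp_differentiable_on_graph[OF C2U])
  have rad: "radial (\<lambda>y. \<psi> (norm y) t)" "radial (\<lambda>y. \<psi> (norm y) (t + a y))" for t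
    using assms(14) unfolding radial_def by metis+
  have "curl (curl (\<lambda>y. U y t)) x = 0" for x t
    by (rule curl_curl_radial_field[OF rad(1)[of t] U dU(1)])
  moreover have "curl (curl (\<lambda>y. U y (t + a y))) x = 0" for x t
    by (rule curl_curl_radial_field[OF rad(2)[of t] U dU(2)])
  ultimately show ?thesis
    using C2Ua eq unfolding is_solution_def dtt_time_shift by simp
qed

end
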